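(* Let the data $y\in\mathbb{R}^n$, $X\in\mathbb{R}^{n\times p}$, $Z\in\mathbb{R}^{n\times q}$ be fixed, with $Z^TZ$ and $X^TP_ZX$ non-singular, and thin SVDs $X=U_X\Sigma_XV_X^T$, $Z=U_Z\Sigma_ZV_Z^T$. Let $\widehat e=y-X\widehat\beta_{2SLS}$ with $\widehat\beta_{2SLS}=(X^TP_ZX)^{-1}X^TP_Zy$, and let $\Pi\in\mathbb{R}^{m\times n}$ be random. Given $\varepsilon_1,\varepsilon_2,\varepsilon_3,\delta\in(0,1/2)$, suppose that jointly with probability at least $1-\delta$: $\|U_Z^T\Pi^T\Pi U_Z-I_q\|_2\le\varepsilon_1$, $\|U_Z^T\Pi^T\Pi U_X-U_Z^TU_X\|_2\le\varepsilon_2$, $\|U_Z^T\Pi^T\Pi\widehat e-U_Z^T\widehat e\|\le\varepsilon_3\|\widehat e\|$; and that $\sigma_{\min}^2(U_Z^TU_X)\ge 2f_1(\varepsilon_1,\varepsilon_2)$. Let $\widetilde A:=U_X^T\Pi^T\Pi U_Z(U_Z^T\Pi^T\Pi U_Z)^{-1}U_Z^T\Pi^T\Pi U_X$ and $\widehat A:=U_X^TU_ZU_Z^TU_X$. Then with probability at least $1-\delta$, $$\|\widetilde A^{-1}-\widehat A^{-1}\|_2\le\frac{2f_1(\varepsilon_1,\varepsilon_2)}{\sigma_{\min}^4(U_Z^TU_X)}.$$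
   Context: $P_Z=Z(Z^TZ)^{-1}Z^T$; $f_1(\varepsilon_1,\varepsilon_2):=[\varepsilon_1+\varepsilon_2(\varepsilon_2+2)]/(1-\varepsilon_1)$. $\|\cdot\|_2$ is the spectral norm, $\sigma_{\min}$ the smallest singular value. *)

theory Defs
  imports "HOL-Probability.Probability"
begin

definition f1 :: "real \<Rightarrow> real \<Rightarrow> real" where
  "f1 e1 e2 = (e1 + e2 * (e2 + 2)) / (1 - e1)"

definition projZ :: "real^'q^'n \<Rightarrow> real^'n^'n" where
  "projZ Z = Z ** matrix_inv (transpose Z ** Z) ** transpose Z"

definition spec_norm :: "real^'c^'r \<Rightarrow> real" where
  "spec_norm A = onorm (\<lambda>x. A *v x)"

definition sigma_min :: "real^'c^'r \<Rightarrow> real" where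
  "sigma_min A = sqrt (Min {lam. \<exists>v. v \<noteq> 0 \<and> (transpose A ** A) *v v = lam *\<^sub>R v})"

definition thin_svd :: "real^'k^'r \<Rightarrow> real^'k^'r \<Rightarrow> real^'k^'k \<Rightarrow> real^'k^'k \<Rightarrow> bool" where
  "thin_svd A U S V \<longleftrightarrow> A = U ** S ** transpose V \<and> transpose U ** U = mat 1
     \<and> (\<forall>i j. i \<noteq> j \<longrightarrow> S $ i $ j = 0) \<and> (\<forall>i. S $ i $ i > 0)
     \<and> transpose V ** V = mat 1 \<and> V ** transpose V = mat 1"

end

(*
  Write S = Pi^T Pi, B = U_Z^T U_X, C = U_Z^T S U_Z and D = U_Z^T S U_X, so that the two
  matrices are D^T C^-1 D and B^T B. From ||B|| <= 1, ||C - I|| <= e1 and ||D - B|| <= e2,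
  the splitting
    D^T C^-1 D - B^T B = D^T (C^-1 - I) D + D^T (D - B) + (D - B)^T B
  gives ||D^T C^-1 D - B^T B|| <= (1 + e2)^2 e1 / (1 - e1) + (2 + e2) e2 = f1(e1, e2).
  The quadratic form of B^T B is ||B x||^2 >= s^2 ||x||^2 with s = sigma_min(B), so that of
  D^T C^-1 D is at least (s^2 - f1) ||x||^2 >= s^2/2 ||x||^2. Hence the inverses have norms at
  most 1/s^2 and 2/s^2, and M^-1 - N^-1 = M^-1 (N - M) N^-1 gives the bound 2 f1 / s^4.

  As sigma_min is the square root of the least eigenvalue of B^T B, the bound ||B x|| >= s ||x||
  needs that least eigenvalue to exist: a symmetric matrix has finitely many eigenvalues, and a
  minimiser of the Rayleigh quotient is an eigenvector.
*)
theory Submission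
  imports Defs
begin

section \<open>Matrix algebra and the spectral norm\<close>

lemma inner_transpose_matrix_vector:
  fixes A :: "real^'a^'b"
  shows "(transpose A *v w) \<bullet> x = w \<bullet> (A *v x)"
  by (simp add: dot_lmul_matrix)

lemma quadratic_form_gram: "x \<bullet> ((transpose B ** B) *v x) = (norm (B *v x))\<^sup>2"
  for B :: "real^'a^'b"
proof -
  have "x \<bullet> ((transpose B ** B) *v x) = (transpose B *v (B *v x)) \<bullet> x"
    by (simp only: matrix_vector_mul_assoc inner_commute)
  then show ?thesis
    by (simp only: inner_transpose_matrix_vector power2_norm_eq_inner)
qed

lemma matrix_diff_ldistrib: "A ** (B - C) = A ** B - A ** C"
  for A :: "'a::ring_1^'n^'m"
  by (vector matrix_matrix_mult_def sum_subtractf[symmetric] algebra_simps)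

lemma matrix_diff_rdistrib: "(A - B) ** C = A ** C - B ** C"
  for A :: "'a::ring_1^'n^'m"
  by (vector matrix_matrix_mult_def sum_subtractf[symmetric] algebra_simps)

lemma transpose_diff: "transpose (A - B) = transpose A - transpose B"
  by (simp add: transpose_def vec_eq_iff)

lemma matrix_vector_mult_scaleR_mat_1: "((c::real) *\<^sub>R mat 1) *v v = c *\<^sub>R (v::real^'n)"
  by (simp add: matrix_vector_mult_def vec_eq_iff mat_def if_distrib if_distribR cong: if_cong)

lemma matrix_inv_mult:
  fixes A :: "'a::field^'n^'n"
  assumes "invertible A"
  shows "A ** matrix_inv A = mat 1" "matrix_inv A ** A = mat 1"
  using someI_ex[OF assms[unfolded invertible_def]] by (simp_all add: matrix_inv_def)

lemma matrix_inv_diff: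
  fixes A B :: "'a::field^'n^'n"
  assumes "invertible A" "invertible B"
  shows "matrix_inv A - matrix_inv B = matrix_inv A ** (B - A) ** matrix_inv B"
  by (simp add: matrix_diff_ldistrib matrix_diff_rdistrib matrix_mul_assoc[symmetric]
      matrix_inv_mult assms)

lemma norm_matrix_vector_le_spec_norm: "norm (A *v x) \<le> spec_norm A * norm x"
  unfolding spec_norm_def by (rule onorm) (rule matrix_vector_mul_bounded_linear)

lemma spec_norm_le: "(\<And>x. norm (A *v x) \<le> K * norm x) \<Longrightarrow> spec_norm A \<le> K"
  unfolding spec_norm_def by (rule onorm_le)

lemma spec_norm_nonneg: "0 \<le> spec_norm A"
  unfolding spec_norm_def by (rule onorm_pos_le) (rule matrix_vector_mul_bounded_linear)

lemma spec_norm_minus_commute: "spec_norm (A - B) = spec_norm (B - A)"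
proof -
  have "(\<lambda>x. (A - B) *v x) = (\<lambda>x. - ((B - A) *v x))"
    by (simp add: matrix_vector_mult_diff_rdistrib)
  then show ?thesis
    unfolding spec_norm_def by (simp add: onorm_neg)
qed

lemma spec_norm_add_le: "spec_norm (A + B) \<le> spec_norm A + spec_norm B"
  unfolding spec_norm_def matrix_vector_mult_add_rdistrib
  by (intro onorm_triangle matrix_vector_mul_bounded_linear)

lemma spec_norm_mult_le: "spec_norm (A ** B) \<le> spec_norm A * spec_norm B"
  using onorm_compose[OF matrix_vector_mul_bounded_linear matrix_vector_mul_bounded_linear, of A B]
  by (simp add: spec_norm_def o_def matrix_vector_mul_assoc)

lemma spec_norm_mult3_le: "spec_norm (A ** B ** C) \<le> spec_norm A * spec_norm B * spec_norm C"
  using spec_norm_mult_le[of "A ** B" C] spec_norm_mult_le[of A B]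
  by (meson mult_right_mono order_trans spec_norm_nonneg)

lemma spec_norm_transpose_le: "spec_norm (transpose A) \<le> spec_norm A"
  for A :: "real^'a^'b"
proof (rule spec_norm_le)
  fix w
  let ?u = "transpose A *v w"
  have "(norm ?u)\<^sup>2 = w \<bullet> (A *v ?u)"
    by (simp only: power2_norm_eq_inner inner_transpose_matrix_vector)
  also have "\<dots> \<le> norm w * (spec_norm A * norm ?u)"
    by (intro order_trans[OF norm_cauchy_schwarz] mult_left_mono norm_matrix_vector_le_spec_norm) simp
  finally show "norm ?u \<le> spec_norm A * norm w"
    by (cases "norm ?u = 0") (auto simp: power2_eq_square spec_norm_nonneg mult.commute)
qed

lemma spec_norm_transpose: "spec_norm (transpose A) = spec_norm A"
  for A :: "real^'a^'b"
  using spec_norm_transpose_le[of A] spec_norm_transpose_le[of "transpose A"] by simp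

lemma spec_norm_le_1_if_orthonormal_columns:
  fixes U :: "real^'a^'b"
  assumes "transpose U ** U = mat 1"
  shows "spec_norm U \<le> 1"
proof (rule spec_norm_le)
  fix x
  have "(norm (U *v x))\<^sup>2 = (norm x)\<^sup>2"
    using quadratic_form_gram[of x U] assms by (simp add: power2_norm_eq_inner)
  then show "norm (U *v x) \<le> 1 * norm x" by simp
qed

section \<open>Inverses of perturbed matrices\<close>

lemma invertible_if_bounded_below:
  fixes A :: "real^'n^'n"
  assumes "0 < c" and below: "\<And>x. c * norm x \<le> norm (A *v x)"
  shows "invertible A" "spec_norm (matrix_inv A) \<le> 1 / c"
proof -
  have "inj ((*v) A)"
  proof (rule injI)
    fix x y assume "A *v x = A *v y"
    then have "c * norm (x - y) \<le> 0"
      using below[of "x - y"] by (simp add: matrix_vector_mult_diff_distrib)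
    then show "x = y" using \<open>0 < c\<close> by (simp add: mult_le_0_iff)
  qed
  then show inv: "invertible A"
    using matrix_left_invertible_injective invertible_left_inverse by blast
  show "spec_norm (matrix_inv A) \<le> 1 / c"
  proof (rule spec_norm_le)
    fix w
    have "A *v (matrix_inv A *v w) = w"
      by (simp add: matrix_vector_mul_assoc matrix_inv_mult(1)[OF inv])
    then show "norm (matrix_inv A *v w) \<le> 1 / c * norm w"
      using below[of "matrix_inv A *v w"] \<open>0 < c\<close> by (simp add: field_simps)
  qed
qed

lemma spec_norm_matrix_inv_diff_id:
  fixes C :: "real^'n^'n"
  assumes "spec_norm (C - mat 1) \<le> e" "e < 1"
  shows "invertible C" "spec_norm (matrix_inv C - mat 1) \<le> e / (1 - e)"
proof -
  have "(1 - e) * norm x \<le> norm (C *v x)" for x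
  proof -
    have "norm x \<le> norm (C *v x) + norm (x - C *v x)"
      by (rule norm_triangle_sub)
    also have "\<dots> = norm (C *v x) + norm ((C - mat 1) *v x)"
      by (simp add: matrix_vector_mult_diff_rdistrib norm_minus_commute)
    also have "\<dots> \<le> norm (C *v x) + e * norm x"
      using norm_matrix_vector_le_spec_norm[of "C - mat 1" x] assms(1)
      by (meson add_left_mono mult_right_mono norm_ge_zero order_trans)
    finally show ?thesis by (simp add: algebra_simps)
  qed
  then have inv: "invertible C" and Ci: "spec_norm (matrix_inv C) \<le> 1 / (1 - e)"
    using invertible_if_bounded_below[of "1 - e" C] assms(2) by auto
  then show "invertible C" by simp
  have "matrix_inv C - mat 1 = matrix_inv C ** (mat 1 - C)"
    by (simp add: matrix_diff_ldistrib matrix_inv_mult(2)[OF inv])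
  then have "spec_norm (matrix_inv C - mat 1) \<le> spec_norm (matrix_inv C) * spec_norm (C - mat 1)"
    using spec_norm_mult_le[of "matrix_inv C" "mat 1 - C"] by (simp add: spec_norm_minus_commute)
  also have "\<dots> \<le> 1 / (1 - e) * e"
    using Ci assms by (intro mult_mono) (auto simp: spec_norm_nonneg)
  finally show "spec_norm (matrix_inv C - mat 1) \<le> e / (1 - e)" by simp
qed

lemma bounded_below_if_quadratic_form_ge:
  assumes "c * (norm x)\<^sup>2 \<le> x \<bullet> (A *v x)"
  shows "c * norm x \<le> norm (A *v x)"
proof (cases "x = 0")
  case False
  have "c * norm x * norm x \<le> norm (A *v x) * norm x"
    using order_trans[OF assms norm_cauchy_schwarz] by (simp add: power2_eq_square mult_ac)
  then show ?thesis using False by simp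
qed simp

lemma abs_quadratic_form_le: "\<bar>x \<bullet> (A *v x)\<bar> \<le> spec_norm A * (norm x)\<^sup>2"
  using order_trans[OF Cauchy_Schwarz_ineq2 mult_left_mono[OF norm_matrix_vector_le_spec_norm]]
  by (simp add: power2_eq_square mult_ac)

lemma spec_norm_matrix_inv_diff_le:
  fixes A A' :: "real^'n^'n"
  assumes pos: "\<And>x. s * (norm x)\<^sup>2 \<le> x \<bullet> (A *v x)"
    and close: "spec_norm (A' - A) \<le> f" and "0 < s" "2 * f \<le> s"
  shows "spec_norm (matrix_inv A' - matrix_inv A) \<le> 2 * f / s\<^sup>2"
proof -
  have "0 \<le> f" using spec_norm_nonneg[of "A' - A"] close by linarith
  have A: "invertible A" "spec_norm (matrix_inv A) \<le> 1 / s"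
    using invertible_if_bounded_below[OF \<open>0 < s\<close> bounded_below_if_quadratic_form_ge[OF pos]]
    by auto
  have "s / 2 * (norm x)\<^sup>2 \<le> x \<bullet> (A' *v x)" for x
  proof -
    have "x \<bullet> (A' *v x) = x \<bullet> (A *v x) + x \<bullet> ((A' - A) *v x)"
      by (simp add: matrix_vector_mult_diff_rdistrib inner_diff_right)
    moreover have "\<bar>x \<bullet> ((A' - A) *v x)\<bar> \<le> f * (norm x)\<^sup>2"
      using abs_quadratic_form_le[of x "A' - A"] close
      by (meson mult_right_mono order_trans zero_le_power2)
    moreover have "s / 2 * (norm x)\<^sup>2 \<le> (s - f) * (norm x)\<^sup>2"
      using \<open>2 * f \<le> s\<close> by (intro mult_right_mono) auto
    ultimately show ?thesis using pos[of x] by (simp add: algebra_simps abs_le_iff)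
  qed
  then have A': "invertible A'" "spec_norm (matrix_inv A') \<le> 2 / s"
    using invertible_if_bounded_below[OF _ bounded_below_if_quadratic_form_ge, of "s / 2" A']
      \<open>0 < s\<close> by auto
  have "spec_norm (matrix_inv A' - matrix_inv A)
      \<le> spec_norm (matrix_inv A') * spec_norm (A - A') * spec_norm (matrix_inv A)"
    unfolding matrix_inv_diff[OF A'(1) A(1)] by (rule spec_norm_mult3_le)
  also have "\<dots> \<le> 2 / s * f * (1 / s)"
    using A(2) A'(2) close \<open>0 < s\<close> \<open>0 \<le> f\<close>
    by (intro mult_mono) (auto simp: spec_norm_nonneg spec_norm_minus_commute)
  finally show ?thesis by (simp add: power2_eq_square)
qed

section \<open>The smallest singular value\<close>

lemma quadratic_nonneg_imp_linear_coeff_eq_0: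
  fixes a c :: real
  assumes "\<And>t. 0 \<le> 2 * t * a + t\<^sup>2 * c"
  shows "a = 0"
proof (rule ccontr)
  assume "a \<noteq> 0"
  define k where "k = \<bar>c\<bar> + 1"
  have "k > 0" "c - 2 * k < 0" unfolding k_def by auto
  have "0 \<le> 2 * (- a / k) * a + (- a / k)\<^sup>2 * c" by (rule assms)
  also have "\<dots> = (a\<^sup>2 / k\<^sup>2) * (c - 2 * k)"
    using \<open>k > 0\<close> by (simp add: field_simps power2_eq_square)
  also have "\<dots> < 0"
    using \<open>a \<noteq> 0\<close> \<open>k > 0\<close> \<open>c - 2 * k < 0\<close> by (intro mult_pos_neg) auto
  finally show False by simp
qed

lemma symmetric_psd_quadratic_form_eq_0:
  fixes M :: "real^'n^'n"
  assumes sym: "transpose M = M" and psd: "\<And>v. 0 \<le> v \<bullet> (M *v v)"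
    and "x \<bullet> (M *v x) = 0"
  shows "M *v x = 0"
proof -
  let ?r = "M *v x"
  have "0 \<le> 2 * t * (?r \<bullet> ?r) + t\<^sup>2 * (?r \<bullet> (M *v ?r))" for t
  proof -
    have "x \<bullet> (M *v ?r) = ?r \<bullet> ?r"
      using inner_transpose_matrix_vector[of M x ?r, unfolded sym] by simp
    then have "(x + t *\<^sub>R ?r) \<bullet> (M *v (x + t *\<^sub>R ?r))
        = x \<bullet> ?r + 2 * t * (?r \<bullet> ?r) + t\<^sup>2 * (?r \<bullet> (M *v ?r))"
      by (simp add: matrix_vector_right_distrib matrix_vector_mult_scaleR inner_add_left
          inner_add_right inner_commute power2_eq_square algebra_simps)
    then show ?thesis using psd[of "x + t *\<^sub>R ?r"] assms(3) by simp
  qed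
  then have "?r \<bullet> ?r = 0" by (rule quadratic_nonneg_imp_linear_coeff_eq_0)
  then show ?thesis by simp
qed

lemma finite_eigenvalues_symmetric:
  fixes A :: "real^'n^'n"
  assumes sym: "transpose A = A"
  shows "finite {lam. \<exists>v. v \<noteq> 0 \<and> A *v v = lam *\<^sub>R v}"
proof -
  define E where "E = {lam. \<exists>v. v \<noteq> 0 \<and> A *v v = lam *\<^sub>R v}"
  define V where "V lam = (SOME v. v \<noteq> 0 \<and> A *v v = lam *\<^sub>R v)" for lam
  have V: "V lam \<noteq> 0" "A *v V lam = lam *\<^sub>R V lam" if "lam \<in> E" for lam
    using someI_ex[OF that[unfolded E_def mem_Collect_eq]] unfolding V_def by auto
  have orth: "V l1 \<bullet> V l2 = 0" if "l1 \<in> E" "l2 \<in> E" "l1 \<noteq> l2" for l1 l2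
  proof -
    have "l1 * (V l1 \<bullet> V l2) = (A *v V l1) \<bullet> V l2" using V(2)[OF that(1)] by simp
    also have "\<dots> = V l1 \<bullet> (A *v V l2)"
      using inner_transpose_matrix_vector[of A "V l1" "V l2", unfolded sym] .
    also have "\<dots> = l2 * (V l1 \<bullet> V l2)" using V(2)[OF that(2)] by simp
    finally show ?thesis using that(3) by simp
  qed
  have "inj_on V E"
  proof (rule inj_onI)
    fix l1 l2 assume l: "l1 \<in> E" "l2 \<in> E" "V l1 = V l2"
    show "l1 = l2"
    proof (rule ccontr)
      assume "l1 \<noteq> l2"
      then have "V l1 \<bullet> V l1 = 0" using orth[OF l(1,2)] l(3) by simp
      then show False using V(1)[OF l(1)] by simp
    qed
  qed
  moreover have "pairwise orthogonal (V ` E)"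
  proof (rule pairwiseI)
    fix x y assume "x \<in> V ` E" "y \<in> V ` E" "x \<noteq> y"
    moreover obtain l1 l2 where "l1 \<in> E" "l2 \<in> E" "x = V l1" "y = V l2"
      using \<open>x \<in> V ` E\<close> \<open>y \<in> V ` E\<close> by (elim imageE)
    ultimately show "orthogonal x y" unfolding orthogonal_def using orth by fast
  qed
  moreover have "0 \<notin> V ` E" using V(1) by (auto elim!: imageE)
  ultimately have "independent (V ` E)" "inj_on V E"
    using pairwise_orthogonal_independent by blast+
  then show ?thesis unfolding E_def[symmetric] using independent_bound finite_imageD by blast
qed

lemma gram_min_eigenpair:
  fixes B :: "real^'p^'q"
  obtains v mu where "v \<noteq> 0" "(transpose B ** B) *v v = mu *\<^sub>R v"
    "\<And>x. mu * (norm x)\<^sup>2 \<le> (norm (B *v x))\<^sup>2"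
proof -
  define Q where "Q x = (norm (B *v x))\<^sup>2" for x
  have "continuous_on (sphere 0 1) Q"
    unfolding Q_def by (intro continuous_intros linear_continuous_on) simp
  moreover have "sphere (0::real^'p) 1 \<noteq> {}" by simp
  ultimately obtain v where v: "norm v = 1" and min: "\<And>y. norm y = 1 \<Longrightarrow> Q v \<le> Q y"
    using continuous_attains_inf[OF compact_sphere] by (metis mem_sphere_0)
  define mu where "mu = Q v"
  have mu: "mu * (norm x)\<^sup>2 \<le> (norm (B *v x))\<^sup>2" for x
  proof (cases "x = 0")
    case False
    have "mu \<le> Q (x /\<^sub>R norm x)" unfolding mu_def using False by (intro min) simp
    also have "\<dots> = (norm (B *v x))\<^sup>2 / (norm x)\<^sup>2"
      unfolding Q_def by (simp add: matrix_vector_mult_scaleR power_mult_distrib field_simps)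
    finally show ?thesis using False by (simp add: pos_le_divide_eq)
  qed simp
  define M where "M = transpose B ** B - mu *\<^sub>R mat 1"
  have M: "x \<bullet> (M *v x) = (norm (B *v x))\<^sup>2 - mu * (norm x)\<^sup>2" for x
    by (simp add: M_def matrix_vector_mult_diff_rdistrib matrix_vector_mult_scaleR_mat_1
        inner_diff_right quadratic_form_gram power2_norm_eq_inner)
  have "M *v v = 0"
  proof (rule symmetric_psd_quadratic_form_eq_0)
    show "transpose M = M"
      by (simp add: M_def transpose_diff transpose_scalar matrix_transpose_mul)
    show "0 \<le> x \<bullet> (M *v x)" for x using mu[of x] M[of x] by simp
    show "v \<bullet> (M *v v) = 0" using M[of v] v by (simp add: mu_def Q_def)
  qed
  then have "(transpose B ** B) *v v = mu *\<^sub>R v"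
    by (simp add: M_def matrix_vector_mult_diff_rdistrib matrix_vector_mult_scaleR_mat_1)
  moreover have "v \<noteq> 0" using v by auto
  ultimately show ?thesis using mu that by blast
qed

lemma sigma_min_sq_le:
  fixes B :: "real^'p^'q"
  shows "(sigma_min B)\<^sup>2 * (norm x)\<^sup>2 \<le> (norm (B *v x))\<^sup>2"
proof -
  define E where "E = {lam. \<exists>v. v \<noteq> 0 \<and> (transpose B ** B) *v v = lam *\<^sub>R v}"
  obtain v mu where "v \<noteq> 0" "(transpose B ** B) *v v = mu *\<^sub>R v"
    and mu: "\<And>x. mu * (norm x)\<^sup>2 \<le> (norm (B *v x))\<^sup>2"
    using gram_min_eigenpair[of B] by metis
  then have "mu \<in> E" unfolding E_def by blast
  have "transpose (transpose B ** B) = transpose B ** B"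
    by (simp add: matrix_transpose_mul)
  then have "finite E"
    unfolding E_def by (rule finite_eigenvalues_symmetric)
  have "0 \<le> lam" if lam: "lam \<in> E" for lam
  proof -
    obtain w where "w \<noteq> 0" and eig: "(transpose B ** B) *v w = lam *\<^sub>R w"
      using lam unfolding E_def by blast
    have "lam * (norm w)\<^sup>2 = w \<bullet> ((transpose B ** B) *v w)"
      by (simp only: eig inner_scaleR_right power2_norm_eq_inner)
    then have "lam * (norm w)\<^sup>2 = (norm (B *v w))\<^sup>2"
      by (simp only: quadratic_form_gram)
    then have "0 \<le> lam * (norm w)\<^sup>2" by simp
    then show ?thesis using \<open>w \<noteq> 0\<close> by (simp add: zero_le_mult_iff)
  qed
  moreover have "Min E \<in> E" using \<open>finite E\<close> \<open>mu \<in> E\<close> by (intro Min_in) auto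
  ultimately have "0 \<le> Min E" by blast
  then have "(sigma_min B)\<^sup>2 = Min E" unfolding sigma_min_def E_def by simp
  also have "\<dots> \<le> mu" using \<open>finite E\<close> \<open>mu \<in> E\<close> by (rule Min_le)
  finally have "(sigma_min B)\<^sup>2 * (norm x)\<^sup>2 \<le> mu * (norm x)\<^sup>2"
    by (intro mult_right_mono) simp_all
  with mu[of x] show ?thesis by linarith
qed

section \<open>The sketched normal matrix\<close>

lemma spec_norm_sketched_gram_diff_le:
  fixes B D :: "real^'p^'q" and C :: "real^'q^'q"
  assumes B: "spec_norm B \<le> 1"
    and C: "spec_norm (C - mat 1) \<le> e1" "e1 < 1"
    and D: "spec_norm (D - B) \<le> e2"
  shows "spec_norm (transpose D ** matrix_inv C ** D - transpose B ** B) \<le> f1 e1 e2"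
proof -
  have Ci: "spec_norm (matrix_inv C - mat 1) \<le> e1 / (1 - e1)"
    by (rule spec_norm_matrix_inv_diff_id(2)[OF C])
  have "spec_norm D \<le> spec_norm B + spec_norm (D - B)"
    using spec_norm_add_le[of B "D - B"] by simp
  then have Dn: "spec_norm D \<le> 1 + e2" using B D by linarith
  have "transpose D ** matrix_inv C ** D - transpose B ** B
      = transpose D ** (matrix_inv C - mat 1) ** D + transpose D ** (D - B) + transpose (D - B) ** B"
    by (simp add: matrix_diff_ldistrib matrix_diff_rdistrib transpose_diff matrix_mul_assoc)
  also have "spec_norm \<dots> \<le> (1 + e2) * (e1 / (1 - e1)) * (1 + e2) + (1 + e2) * e2 + e2 * 1"
  proof -
    have "0 \<le> e1" "0 \<le> e2"
      using C(1) D spec_norm_nonneg order_trans by blast+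
    have "spec_norm (transpose D ** (matrix_inv C - mat 1) ** D)
        \<le> spec_norm D * spec_norm (matrix_inv C - mat 1) * spec_norm D"
      using spec_norm_mult3_le[of "transpose D"] by (simp only: spec_norm_transpose)
    also have "\<dots> \<le> (1 + e2) * (e1 / (1 - e1)) * (1 + e2)"
      using Dn Ci \<open>0 \<le> e1\<close> \<open>0 \<le> e2\<close> C(2) by (intro mult_mono) (auto simp: spec_norm_nonneg)
    finally have "spec_norm (transpose D ** (matrix_inv C - mat 1) ** D)
        \<le> (1 + e2) * (e1 / (1 - e1)) * (1 + e2)" .
    moreover have "spec_norm (transpose D ** (D - B)) \<le> (1 + e2) * e2"
      using spec_norm_mult_le[of "transpose D" "D - B"] Dn D \<open>0 \<le> e2\<close>
      by (simp only: spec_norm_transpose) (meson mult_mono spec_norm_nonneg order_trans)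
    moreover have "spec_norm (transpose (D - B) ** B) \<le> e2 * 1"
      using spec_norm_mult_le[of "transpose (D - B)" B] B D \<open>0 \<le> e2\<close>
      by (simp only: spec_norm_transpose) (meson mult_mono spec_norm_nonneg order_trans)
    ultimately show ?thesis
      using spec_norm_add_le order_trans add_mono by meson
  qed
  also have "\<dots> = f1 e1 e2"
    using C(2) by (simp add: f1_def field_simps)
  finally show ?thesis .
qed

lemma spec_norm_sketched_inverse_diff_le:
  fixes UX :: "real^'p^'n" and UZ :: "real^'q^'n" and S :: "real^'n^'n"
  assumes UX: "transpose UX ** UX = mat 1" and UZ: "transpose UZ ** UZ = mat 1"
    and S: "transpose S = S"
    and e1: "spec_norm (transpose UZ ** S ** UZ - mat 1) \<le> e1" "0 < e1" "e1 < 1"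
    and e2: "spec_norm (transpose UZ ** S ** UX - transpose UZ ** UX) \<le> e2"
    and gap: "2 * f1 e1 e2 \<le> (sigma_min (transpose UZ ** UX))\<^sup>2"
  shows "spec_norm (matrix_inv (transpose UX ** S ** UZ ** matrix_inv (transpose UZ ** S ** UZ)
           ** transpose UZ ** S ** UX) - matrix_inv (transpose UX ** UZ ** transpose UZ ** UX))
         \<le> 2 * f1 e1 e2 / (sigma_min (transpose UZ ** UX)) ^ 4"
proof -
  define B where "B = transpose UZ ** UX"
  define C where "C = transpose UZ ** S ** UZ"
  define D where "D = transpose UZ ** S ** UX"
  have "spec_norm B \<le> spec_norm (transpose UZ) * spec_norm UX"
    unfolding B_def by (rule spec_norm_mult_le)
  also have "\<dots> \<le> 1"
    using spec_norm_le_1_if_orthonormal_columns[OF UX] spec_norm_le_1_if_orthonormal_columns[OF UZ]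
    by (simp add: spec_norm_transpose mult_le_one spec_norm_nonneg)
  finally have "spec_norm (transpose D ** matrix_inv C ** D - transpose B ** B) \<le> f1 e1 e2"
    using e1 e2 unfolding B_def C_def D_def by (intro spec_norm_sketched_gram_diff_le)
  moreover have "(sigma_min B)\<^sup>2 * (norm x)\<^sup>2 \<le> x \<bullet> ((transpose B ** B) *v x)" for x
    unfolding quadratic_form_gram by (rule sigma_min_sq_le)
  moreover have "0 < f1 e1 e2"
    using e1 spec_norm_nonneg[of "transpose UZ ** S ** UX - transpose UZ ** UX"] e2
    unfolding f1_def by (intro divide_pos_pos add_pos_nonneg) auto
  ultimately have "spec_norm (matrix_inv (transpose D ** matrix_inv C ** D) - matrix_inv (transpose B ** B))
      \<le> 2 * f1 e1 e2 / ((sigma_min B)\<^sup>2)\<^sup>2"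
    using gap unfolding B_def[symmetric] by (intro spec_norm_matrix_inv_diff_le) auto
  moreover have "transpose D ** matrix_inv C ** D
      = transpose UX ** S ** UZ ** matrix_inv C ** transpose UZ ** S ** UX"
    by (simp add: D_def matrix_transpose_mul S matrix_mul_assoc)
  moreover have "transpose B ** B = transpose UX ** UZ ** transpose UZ ** UX"
    by (simp add: B_def matrix_transpose_mul matrix_mul_assoc)
  ultimately show ?thesis
    by (simp add: B_def C_def power2_eq_square power4_eq_xxxx)
qed

theorem lemmaB6:
  fixes M :: "'w measure"
    and y :: "real^'n" and X :: "real^'p^'n" and Z :: "real^'q^'n"
    and UX :: "real^'p^'n" and SX VX :: "real^'p^'p"
    and UZ :: "real^'q^'n" and SZ VZ :: "real^'q^'q"
    and Pi :: "'w \<Rightarrow> real^'n^'m"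
    and e1 e2 e3 \<delta> :: real
  assumes "prob_space M"
    and "invertible (transpose Z ** Z)"
    and "invertible (transpose X ** projZ Z ** X)"
    and "thin_svd X UX SX VX" and "thin_svd Z UZ SZ VZ"
    and "0 < e1" "e1 < 1/2" "0 < e2" "e2 < 1/2" "0 < e3" "e3 < 1/2" "0 < \<delta>" "\<delta> < 1/2"
    and "\<exists>E \<in> sets M. measure M E \<ge> 1 - \<delta> \<and> (\<forall>\<omega>\<in>E.
           (let S = transpose (Pi \<omega>) ** Pi \<omega>;
                b = matrix_inv (transpose X ** projZ Z ** X) *v (transpose X ** projZ Z *v y);
                eh = y - X *v b
            in spec_norm (transpose UZ ** S ** UZ - mat 1) \<le> e1
             \<and> spec_norm (transpose UZ ** S ** UX - transpose UZ ** UX) \<le> e2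
             \<and> norm (transpose UZ *v (S *v eh) - transpose UZ *v eh) \<le> e3 * norm eh))"
    and "(sigma_min (transpose UZ ** UX))\<^sup>2 \<ge> 2 * f1 e1 e2"
  shows "\<exists>E \<in> sets M. measure M E \<ge> 1 - \<delta> \<and> (\<forall>\<omega>\<in>E.
           (let S = transpose (Pi \<omega>) ** Pi \<omega>;
                At = transpose UX ** S ** UZ ** matrix_inv (transpose UZ ** S ** UZ)
                       ** transpose UZ ** S ** UX;
                Ah = transpose UX ** UZ ** transpose UZ ** UX
            in spec_norm (matrix_inv At - matrix_inv Ah)
                 \<le> 2 * f1 e1 e2 / (sigma_min (transpose UZ ** UX)) ^ 4))"
proof -
  obtain E where E: "E \<in> sets M" "measure M E \<ge> 1 - \<delta>" and good: "\<forall>\<omega>\<in>E.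
      spec_norm (transpose UZ ** (transpose (Pi \<omega>) ** Pi \<omega>) ** UZ - mat 1) \<le> e1
    \<and> spec_norm (transpose UZ ** (transpose (Pi \<omega>) ** Pi \<omega>) ** UX - transpose UZ ** UX) \<le> e2"
    using assms(14) unfolding Let_def by blast
  have "transpose UX ** UX = mat 1" "transpose UZ ** UZ = mat 1"
    using assms(4,5) unfolding thin_svd_def by blast+
  moreover have "transpose (transpose (Pi \<omega>) ** Pi \<omega>) = transpose (Pi \<omega>) ** Pi \<omega>" for \<omega>
    by (simp add: matrix_transpose_mul)
  ultimately show ?thesis
    using E good assms(6,7,15) unfolding Let_def
    by (intro bexI[of _ E] conjI ballI spec_norm_sketched_inverse_diff_le) auto
qed

end
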